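(* Let $n_x,n_y\ge1$, $n=n_x+n_y+1$, and let $\mathcal{F}\subseteq\mathbb{R}^{n_x+n_y}$ be nonempty and compact. Let $f$ be a quadratic function of $(\mathbf{x},\mathbf{y})\in\mathbb{R}^{n_x}\times\mathbb{R}^{n_y}$ and $\mathbf{Q}\in\mathcal{S}^n$ with $\mathbf{Q}\bullet\mathbf{z}\mathbf{z}^\top=f(\mathbf{x},\mathbf{y})$ for $\mathbf{z}=[1,\mathbf{x}^\top,\mathbf{y}^\top]^\top$; write $q(\mathbf{P})=\mathbf{Q}\bullet\mathbf{P}$. Let $\phi(\mathbf{x})=\inf_{\mathbf{y}}\{f(\mathbf{x},\mathbf{y}):[\mathbf{x}^\top,\mathbf{y}^\top]^\top\in\mathcal{F}\}$ (with $\inf\emptyset=+\infty$). For $\mathbf{x}\in\mathbb{R}^{n_x}$ define $$\mathcal{G}_1(\mathbf{x})=\{\mathbf{P}\in\mathcal{G}(\mathcal{F}) : \text{the }\mathbf{x}\text{-block of }\mathbf{P}\text{ equals }\mathbf{x},\ \text{the }\mathbf{X}\text{-block of }\mathbf{P}\text{ equals }\mathbf{x}\mathbf{x}^\top\},$$ $$\mathcal{G}_2(\mathbf{x})=\{\mathbf{P}\in\mathcal{G}(\mathcal{F}) : \text{the }\mathbf{x}\text{-block equals }\mathbf{x},\ \text{the }\mathbf{X}\text{-block equals }\mathbf{x}\mathbf{x}^\top,\ \text{the }\mathbf{Z}\text{-block equals }\mathbf{y}_{\mathbf{P}}\mathbf{x}^\top\},$$ where $\mathbf{y}_{\mathbf{P}}$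 is the $\mathbf{y}$-block of $\mathbf{P}$. Then $\phi(\mathbf{x})=\inf_{\mathbf{P}}\{q(\mathbf{P}):\mathbf{P}\in\mathcal{G}_j(\mathbf{x})\}$ for $j=1,2$ and all $\mathbf{x}\in\mathbb{R}^{n_x}$. Moreover $\mathcal{G}_1(\mathbf{x})=\mathcal{G}_2(\mathbf{x})$, and both sets remain unchanged if the constraint that the $\mathbf{X}$-block equals $\mathbf{x}\mathbf{x}^\top$ is relaxed to $\operatorname{diag}(\mathbf{X})=\mathbf{x}\circ\mathbf{x}$ (entrywise product).
   Context: $\mathcal{S}^n$ is the space of symmetric $n\times n$ matrices and $\mathbf{A}\bullet\mathbf{B}=\operatorname{tr}(\mathbf{A}^\top\mathbf{B})$. $\mathcal{G}(\mathcal{F})=\operatorname{cl}\operatorname{conv}\{\mathbf{z}\mathbf{z}^\top:\mathbf{z}=[1,\mathbf{x}^\top,\mathbf{y}^\top]^\top,\ [\mathbf{x}^\top,\mathbf{y}^\top]^\top\in\mathcal{F}\}$. Every $\mathbf{P}\in\mathcal{S}^n$ is partitioned as $\mathbf{P}=\begin{pmatrix}x_0&\mathbf{x}^\top&\mathbf{y}^\top\\ \mathbf{x}&\mathbf{X}&\mathbf{Z}^\top\\ \mathbf{y}&\mathbf{Z}&\mathbf{Y}\end{pmatrix}$ with $\mathbf{x}\in\mathbb{R}^{n_x}$, $\mathbf{y}\in\mathbb{R}^{n_y}$, $\mathbf{X}\in\mathcal{S}^{n_x}$, $\mathbf{Z}\in\mathbb{R}^{n_y\times n_x}$, $\mathbf{Y}\in\mathcal{S}^{n_y}$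 (these are the "blocks" referred to). The infimum over an empty set is $+\infty$. *)

theory Defs
  imports "HOL-Analysis.Analysis"
begin

text \<open>Index set of \<open>S^n\<close>, \<open>n = 1 + n_x + n_y\<close>: \<open>Inl ()\<close> is the leading index 0,
  \<open>Inr (Inl i)\<close> the x-indices, \<open>Inr (Inr j)\<close> the y-indices.\<close>
type_synonym ('x, 'y) idx = "unit + ('x + 'y)"

definition zvec :: "real^'x \<Rightarrow> real^'y \<Rightarrow> real^(('x,'y) idx)" where
  "zvec x y = (\<chi> k. case k of Inl _ \<Rightarrow> 1 | Inr (Inl i) \<Rightarrow> x $ i | Inr (Inr j) \<Rightarrow> y $ j)"

definition outer :: "real^'n \<Rightarrow> real^'n^'n" where
  "outer z = (\<chi> a b. z $ a * z $ b)"

definition frob :: "real^'n^'n \<Rightarrow> real^'n^'n \<Rightarrow> real" where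
  "frob A B = (\<Sum>a\<in>UNIV. \<Sum>b\<in>UNIV. A $ a $ b * B $ a $ b)"

definition symmetric_mat :: "real^'n^'n \<Rightarrow> bool" where
  "symmetric_mat A \<longleftrightarrow> transpose A = A"

definition GF :: "((real^'x) \<times> (real^'y)) set \<Rightarrow> (real^(('x,'y) idx)^(('x,'y) idx)) set" where
  "GF F = closure (convex hull {outer (zvec x y) | x y. (x, y) \<in> F})"

definition xblk :: "real^(('x::finite,'y::finite) idx)^(('x,'y) idx) \<Rightarrow> real^'x" where
  "xblk P = (\<chi> i. P $ Inr (Inl i) $ Inl ())"
definition yblk :: "real^(('x::finite,'y::finite) idx)^(('x,'y) idx) \<Rightarrow> real^'y" where
  "yblk P = (\<chi> j. P $ Inr (Inr j) $ Inl ())"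
definition Xblk :: "real^(('x::finite,'y::finite) idx)^(('x,'y) idx) \<Rightarrow> real^'x^'x" where
  "Xblk P = (\<chi> i i'. P $ Inr (Inl i) $ Inr (Inl i'))"
definition Zblk :: "real^(('x::finite,'y::finite) idx)^(('x,'y) idx) \<Rightarrow> real^'x^'y" where
  "Zblk P = (\<chi> j i. P $ Inr (Inr j) $ Inr (Inl i))"

definition G1 :: "((real^'x) \<times> (real^'y)) set \<Rightarrow> real^'x \<Rightarrow> (real^(('x,'y) idx)^(('x,'y) idx)) set" where
  "G1 F x = {P \<in> GF F. xblk P = x \<and> Xblk P = outer x}"

definition G2 :: "((real^'x) \<times> (real^'y)) set \<Rightarrow> real^'x \<Rightarrow> (real^(('x,'y) idx)^(('x,'y) idx)) set" where
  "G2 F x = {P \<in> GF F. xblk P = x \<and> Xblk P = outer x \<and>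
                Zblk P = (\<chi> j i. yblk P $ j * x $ i)}"

definition G1_rel :: "((real^'x) \<times> (real^'y)) set \<Rightarrow> real^'x \<Rightarrow> (real^(('x,'y) idx)^(('x,'y) idx)) set" where
  "G1_rel F x = {P \<in> GF F. xblk P = x \<and> (\<forall>i. Xblk P $ i $ i = x $ i * x $ i)}"

definition G2_rel :: "((real^'x) \<times> (real^'y)) set \<Rightarrow> real^'x \<Rightarrow> (real^(('x,'y) idx)^(('x,'y) idx)) set" where
  "G2_rel F x = {P \<in> GF F. xblk P = x \<and> (\<forall>i. Xblk P $ i $ i = x $ i * x $ i) \<and>
                Zblk P = (\<chi> j i. yblk P $ j * x $ i)}"

definition phi :: "((real^'x) \<times> (real^'y)) set \<Rightarrow> (real^'x \<Rightarrow> real^'y \<Rightarrow> real) \<Rightarrow> real^'x \<Rightarrow> ereal" where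
  "phi F f x = (INF y \<in> {y. (x, y) \<in> F}. ereal (f x y))"

end

theory Submission
  imports Defs
begin

text \<open>For compact \<open>F\<close> the closure in \<open>GF F\<close> is redundant: \<open>GF F\<close> is the convex hull of the
  lifted points \<open>z z\<^sup>T\<close>. For fixed \<open>x\<close>, the linear functional
  \<open>h(P) = \<Sum>\<^sub>i (X\<^sub>i\<^sub>i - 2 x\<^sub>i P\<^sub>i\<^sub>0 + x\<^sub>i\<^sup>2 P\<^sub>0\<^sub>0)\<close> takes the value \<open>\<Sum>\<^sub>i (a\<^sub>i - x\<^sub>i)\<^sup>2 \<ge> 0\<close> at the
  lifted point of \<open>(a, b)\<close> and vanishes on \<open>G1_rel F x\<close>, so every element of \<open>G1_rel F x\<close> is a
  convex combination of lifted points with \<open>a = x\<close> only. Conversely, the block constraints of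
  \<open>G2 F x\<close> are affine in \<open>P\<close> and hold at those points. Hence all four sets are the convex hull
  of the lifted fibre over \<open>x\<close>, on which the linear \<open>frob Q\<close> has the same infimum as on the
  fibre itself, namely \<open>phi F f x\<close>.\<close>

lemma blocks_outer_zvec [simp]:
  "xblk (outer (zvec a b)) = a"
  "yblk (outer (zvec a b)) = b"
  "Xblk (outer (zvec a b)) = outer a"
  "Zblk (outer (zvec a b)) = (\<chi> j i. b $ j * a $ i)"
  "outer (zvec a b) $ Inl () $ Inl () = 1"
  by (auto simp: vec_eq_iff xblk_def yblk_def Xblk_def Zblk_def outer_def zvec_def)

definition lifted_fibre ::
    "((real^'x) \<times> (real^'y)) set \<Rightarrow> real^'x \<Rightarrow> (real^(('x,'y) idx)^(('x,'y) idx)) set" where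
  "lifted_fibre F x = {outer (zvec x y) | y. (x, y) \<in> F}"

lemma continuous_on_zvec_component:
  "continuous_on UNIV (\<lambda>p::(real^'x::finite) \<times> (real^'y::finite). zvec (fst p) (snd p) $ k)"
proof (cases k)
  case (Inr c)
  then show ?thesis
    by (cases c) (auto simp: zvec_def intro!: continuous_intros)
qed (simp add: zvec_def)

lemma continuous_on_outer_zvec:
  "continuous_on UNIV (\<lambda>p::(real^'x::finite) \<times> (real^'y::finite). outer (zvec (fst p) (snd p)))"
  unfolding outer_def
  by (intro continuous_on_vec_lambda continuous_on_mult continuous_on_zvec_component)

lemma GF_eq_convex_hull:
  assumes "compact F"
  shows "GF F = convex hull {outer (zvec x y) | x y. (x, y) \<in> F}"
proof -
  have "{outer (zvec x y) | x y. (x, y) \<in> F} = (\<lambda>p. outer (zvec (fst p) (snd p))) ` F"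
    by force
  then have "compact {outer (zvec x y) | x y. (x, y) \<in> F}"
    using compact_continuous_image[OF continuous_on_subset[OF continuous_on_outer_zvec] assms]
    by simp
  then show ?thesis
    unfolding GF_def by (simp add: compact_convex_hull compact_imp_closed)
qed

lemma convex_hull_lifted_fibre_subset_GF: "convex hull (lifted_fibre F x) \<subseteq> GF F"
proof -
  have "lifted_fibre F x \<subseteq> {outer (zvec x y) | x y. (x, y) \<in> F}"
    unfolding lifted_fibre_def by blast
  then show ?thesis
    unfolding GF_def by (meson closure_subset hull_mono order_trans)
qed

lemma convex_block_constraints:
  "convex {P. xblk P = x \<and> Xblk P = outer x \<and> Zblk P = (\<chi> j i. yblk P $ j * x $ i)}"
  unfolding convex_def
  by (auto simp: vec_eq_iff xblk_def yblk_def Xblk_def Zblk_def outer_def algebra_simps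
      simp flip: distrib_right)

lemma convex_hull_lifted_fibre_subset_G2: "convex hull (lifted_fibre F x) \<subseteq> G2 F x"
proof -
  have "lifted_fibre F x \<subseteq>
      {P. xblk P = x \<and> Xblk P = outer x \<and> Zblk P = (\<chi> j i. yblk P $ j * x $ i)}"
    unfolding lifted_fibre_def by auto
  then have "convex hull (lifted_fibre F x) \<subseteq>
      {P. xblk P = x \<and> Xblk P = outer x \<and> Zblk P = (\<chi> j i. yblk P $ j * x $ i)}"
    by (rule hull_minimal[where S = convex, OF _ convex_block_constraints])
  then show ?thesis
    using convex_hull_lifted_fibre_subset_GF by (auto simp: G2_def)
qed

lemma convex_hull_zero_set_of_nonneg_linear:
  fixes h :: "'a::real_vector \<Rightarrow> real"
  assumes P: "P \<in> convex hull S" and "linear h" and nonneg: "\<And>v. v \<in> S \<Longrightarrow> 0 \<le> h v"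
    and "h P = 0"
  shows "P \<in> convex hull {v\<in>S. h v = 0}"
proof -
  obtain T u where T: "finite T" "T \<subseteq> S" "\<forall>v\<in>T. 0 \<le> u v" "sum u T = 1"
      "(\<Sum>v\<in>T. u v *\<^sub>R v) = P"
    using P unfolding convex_hull_explicit by blast
  have "(\<Sum>v\<in>T. u v * h v) = 0"
    using \<open>h P = 0\<close> T(5)[symmetric]
    by (simp add: linear_sum[OF \<open>linear h\<close>] linear_scale[OF \<open>linear h\<close>])
  then have weights_vanish: "\<forall>v\<in>T. u v * h v = 0"
    using T nonneg by (subst sum_nonneg_eq_0_iff[symmetric]) auto
  define T' where "T' = {v\<in>T. h v = 0}"
  have "T' \<subseteq> T" "\<forall>v\<in>T - T'. u v = 0"
    using weights_vanish by (auto simp: T'_def)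
  then have "sum u T' = 1" "(\<Sum>v\<in>T'. u v *\<^sub>R v) = P"
    using sum.mono_neutral_left[OF T(1) \<open>T' \<subseteq> T\<close>, of u]
      sum.mono_neutral_left[OF T(1) \<open>T' \<subseteq> T\<close>, of "\<lambda>v. u v *\<^sub>R v"] T(4,5)
    by simp_all
  moreover have "finite T'" "T' \<subseteq> {v\<in>S. h v = 0}" "\<forall>v\<in>T'. 0 \<le> u v"
    using T by (auto simp: T'_def)
  ultimately show ?thesis
    unfolding convex_hull_explicit by blast
qed

lemma G1_rel_subset_convex_hull_lifted_fibre:
  fixes F :: "((real^'x::finite) \<times> (real^'y::finite)) set"
  assumes "compact F"
  shows "G1_rel F x \<subseteq> convex hull (lifted_fibre F x)"
proof
  fix P assume "P \<in> G1_rel F x"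
  then have P: "P \<in> GF F" "xblk P = x" "\<forall>i. Xblk P $ i $ i = x $ i * x $ i"
    by (auto simp: G1_rel_def)
  let ?S = "{outer (zvec x y) | x y. (x, y) \<in> F}"
  define h where "h M = (\<Sum>i\<in>UNIV. M $ Inr (Inl i) $ Inr (Inl i)
      - 2 * x $ i * M $ Inr (Inl i) $ Inl () + (x $ i)\<^sup>2 * M $ Inl () $ Inl ())"
    for M :: "real^(('x,'y) idx)^(('x,'y) idx)"
  have "linear h"
    by (rule linearI) (simp_all add: h_def sum.distrib sum_distrib_left algebra_simps sum_subtractf)
  have h_lifted: "h (outer (zvec a b)) = (\<Sum>i\<in>UNIV. (a $ i - x $ i)\<^sup>2)" for a b
    by (simp add: h_def outer_def zvec_def power2_eq_square algebra_simps)
  have "P \<in> convex hull ?S"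
    using P(1) GF_eq_convex_hull[OF assms] by simp
  moreover have "convex hull ?S \<subseteq> {P. P $ Inl () $ Inl () = 1}"
    by (rule hull_minimal) (auto simp: convex_def)
  ultimately have "P $ Inl () $ Inl () = 1"
    by auto
  then have "h P = 0"
    using P by (simp add: h_def xblk_def Xblk_def vec_eq_iff power2_eq_square)
  moreover have "0 \<le> h v" if "v \<in> ?S" for v
    using that by (auto simp: h_lifted intro!: sum_nonneg)
  ultimately have "P \<in> convex hull {v\<in>?S. h v = 0}"
    using convex_hull_zero_set_of_nonneg_linear[OF \<open>P \<in> convex hull ?S\<close> \<open>linear h\<close>]
    by blast
  moreover have "{v\<in>?S. h v = 0} \<subseteq> lifted_fibre F x"
  proof clarify
    fix a b assume "(a, b) \<in> F" "h (outer (zvec a b)) = 0"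
    then have "a = x"
      by (simp add: h_lifted sum_nonneg_eq_0_iff vec_eq_iff)
    with \<open>(a, b) \<in> F\<close> show "outer (zvec a b) \<in> lifted_fibre F x"
      by (auto simp: lifted_fibre_def)
  qed
  ultimately show "P \<in> convex hull (lifted_fibre F x)"
    using hull_mono by blast
qed

lemma G_sets_eq_convex_hull_lifted_fibre:
  assumes "compact F"
  shows "G1 F x = convex hull (lifted_fibre F x)" "G2 F x = convex hull (lifted_fibre F x)"
    "G1_rel F x = convex hull (lifted_fibre F x)" "G2_rel F x = convex hull (lifted_fibre F x)"
proof -
  have "G2 F x \<subseteq> G1 F x" "G1 F x \<subseteq> G1_rel F x" "G2 F x \<subseteq> G2_rel F x" "G2_rel F x \<subseteq> G1_rel F x"
    by (auto simp: G1_def G2_def G1_rel_def G2_rel_def outer_def)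
  then show "G1 F x = convex hull (lifted_fibre F x)" "G2 F x = convex hull (lifted_fibre F x)"
    "G1_rel F x = convex hull (lifted_fibre F x)" "G2_rel F x = convex hull (lifted_fibre F x)"
    using convex_hull_lifted_fibre_subset_G2 G1_rel_subset_convex_hull_lifted_fibre[OF assms]
    by blast+
qed

lemma frob_eq_inner: "frob A B = A \<bullet> B"
  by (simp add: frob_def inner_vec_def)

lemma INF_linear_convex_hull:
  fixes h :: "'a::real_vector \<Rightarrow> real"
  assumes "linear h"
  shows "(INF P\<in>convex hull S. ereal (h P)) = (INF v\<in>S. ereal (h v))"
proof (rule antisym)
  show "(INF P\<in>convex hull S. ereal (h P)) \<le> (INF v\<in>S. ereal (h v))"
    by (rule INF_superset_mono[OF hull_subset order_refl])
  let ?m = "INF v\<in>S. ereal (h v)"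
  have "convex {r. ?m \<le> ereal r}"
    unfolding is_interval_convex_1[symmetric] is_interval_1 by (auto intro: order_trans)
  then have "convex (h -` {r. ?m \<le> ereal r})"
    by (rule convex_linear_vimage[OF assms])
  moreover have "S \<subseteq> h -` {r. ?m \<le> ereal r}"
    by (auto intro: INF_lower)
  ultimately have "convex hull S \<subseteq> h -` {r. ?m \<le> ereal r}"
    by (rule hull_minimal[rotated])
  then show "?m \<le> (INF P\<in>convex hull S. ereal (h P))"
    by (auto intro: INF_greatest)
qed

lemma phi_eq_INF_convex_hull_lifted_fibre:
  assumes "\<And>x y. frob Q (outer (zvec x y)) = f x y"
  shows "phi F f x = (INF P\<in>convex hull (lifted_fibre F x). ereal (frob Q P))"
proof -
  have "lifted_fibre F x = (\<lambda>y. outer (zvec x y)) ` {y. (x, y) \<in> F}"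
    by (auto simp: lifted_fibre_def)
  then have "(INF P\<in>lifted_fibre F x. ereal (frob Q P)) = phi F f x"
    by (simp add: image_image assms phi_def)
  moreover have "linear (frob Q)"
    unfolding frob_eq_inner[abs_def] by (rule bounded_linear.linear[OF bounded_linear_inner_right])
  ultimately show ?thesis
    using INF_linear_convex_hull by metis
qed

theorem theorem3:
  fixes F :: "((real^'x) \<times> (real^'y)) set"
    and f :: "real^'x \<Rightarrow> real^'y \<Rightarrow> real"
    and Q :: "real^(('x,'y) idx)^(('x,'y) idx)"
  assumes "F \<noteq> {}" and "compact F"
    and "symmetric_mat Q"
    and "\<And>x y. frob Q (outer (zvec x y)) = f x y"
  shows "\<forall>x. phi F f x = (INF P \<in> G1 F x. ereal (frob Q P))
           \<and> phi F f x = (INF P \<in> G2 F x. ereal (frob Q P))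
           \<and> G1 F x = G2 F x
           \<and> G1_rel F x = G1 F x
           \<and> G2_rel F x = G2 F x"
  using phi_eq_INF_convex_hull_lifted_fibre[OF assms(4)]
    G_sets_eq_convex_hull_lifted_fibre[OF assms(2)]
  by simp

end
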